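(* Fix integers $T,K>1$ and nonnegative numbers $\epsilon(1),\dots,\epsilon(K)$ such that $\min_{j:\epsilon(j)>0}\epsilon(j)^2\ge\frac{2}{T}\sum_{j}\epsilon(j)^2$. Then there exist fixed parameters $m(1),\dots,m(K)$ such that the following holds: for any (possibly randomized) learner strategy $A$ there exists a loss assignment $\{\ell_t(j)\}_{t\le T,j\le K}$ satisfying $|\ell_t(j)-m(j)|\le\epsilon(j)$ for all $t,j$, such that \[ \mathbb{E}_A\Big[\sum_{t=1}^{T}\ell_t(I_t)\Big]-\min_{j=1,\dots,K}\sum_{t=1}^{T}\ell_t(j)\;\ge\; \begin{cases} c\sqrt{T\sum_{j=1}^{K}\epsilon(j)^2} & \text{with bandit feedback},\\ c\sqrt{T\max_{j}\epsilon(j)^2} & \text{with full information feedback},\end{cases} \] where $c>0$ is a universal constant.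
   Context: Repeated game over $K$ arms and $T$ rounds: the loss assignment is fixed in advance (oblivious adversary); at each round the learner picks $I_t\in\{1,\dots,K\}$ and incurs $\ell_t(I_t)$. With bandit feedback she then observes only $\ell_t(I_t)$; with full information she observes $\ell_t(i)$ for all $i$. $I_t$ may depend on previous observations and the learner's internal randomness; the expectation is over that randomness. *)

theory Defs
  imports "HOL-Probability.Probability"
begin

text \<open>Arms are 1..K, rounds are 1..T. A loss assignment is l :: nat => nat => real,
  l t j = loss of arm j at round t (fixed in advance: oblivious adversary).

  A (possibly randomized) learner is given as a behavioural strategy: a map from the
  history observed so far (own past actions together with the observed feedback) to a
  probability distribution over the next arm. This covers every learner using internal
  randomness (Kuhn's theorem for games of perfect recall).\<close>

type_synonym bandit_learner = "(nat \<times> real) list \<Rightarrow> nat pmf"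
type_synonym full_learner = "(nat \<times> (nat \<Rightarrow> real)) list \<Rightarrow> nat pmf"

definition valid_bandit_learner :: "nat \<Rightarrow> bandit_learner \<Rightarrow> bool" where
  "valid_bandit_learner K A \<longleftrightarrow> (\<forall>h. set_pmf (A h) \<subseteq> {1..K})"

definition valid_full_learner :: "nat \<Rightarrow> full_learner \<Rightarrow> bool" where
  "valid_full_learner K A \<longleftrightarrow> (\<forall>h. set_pmf (A h) \<subseteq> {1..K})"

fun bandit_hist :: "bandit_learner \<Rightarrow> (nat \<Rightarrow> nat \<Rightarrow> real) \<Rightarrow> nat \<Rightarrow> (nat \<times> real) list pmf" where
  "bandit_hist A l 0 = return_pmf []"
| "bandit_hist A l (Suc t) =
     bind_pmf (bandit_hist A l t) (\<lambda>h. map_pmf (\<lambda>i. h @ [(i, l (Suc t) i)]) (A h))"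

fun full_hist :: "full_learner \<Rightarrow> (nat \<Rightarrow> nat \<Rightarrow> real) \<Rightarrow> nat \<Rightarrow> (nat \<times> (nat \<Rightarrow> real)) list pmf" where
  "full_hist A l 0 = return_pmf []"
| "full_hist A l (Suc t) =
     bind_pmf (full_hist A l t) (\<lambda>h. map_pmf (\<lambda>i. h @ [(i, l (Suc t))]) (A h))"

definition bandit_exp_loss :: "bandit_learner \<Rightarrow> (nat \<Rightarrow> nat \<Rightarrow> real) \<Rightarrow> nat \<Rightarrow> real" where
  "bandit_exp_loss A l T =
     measure_pmf.expectation (bandit_hist A l T) (\<lambda>h. \<Sum>k<length h. snd (h ! k))"

definition full_exp_loss :: "full_learner \<Rightarrow> (nat \<Rightarrow> nat \<Rightarrow> real) \<Rightarrow> nat \<Rightarrow> real" where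
  "full_exp_loss A l T =
     measure_pmf.expectation (full_hist A l T) (\<lambda>h. \<Sum>k<length h. snd (h ! k) (fst (h ! k)))"

definition best_arm_loss :: "nat \<Rightarrow> (nat \<Rightarrow> nat \<Rightarrow> real) \<Rightarrow> nat \<Rightarrow> real" where
  "best_arm_loss K l T = (MIN j\<in>{1..K}. \<Sum>t=1..T. l t j)"

end

theory Submission
  imports Defs
begin

text \<open>Take \<open>m = 0\<close> and draw the loss assignment at random: some assignment in the support
  inflicts at least the expected regret.

  With full information, and with bandit feedback when a single arm \<open>k\<close> carries at least an
  eighth of \<open>S = \<Sum>j \<epsilon>(j)\<^sup>2\<close>, let arm \<open>k\<close> follow a fair \<open>\<plusminus>\<epsilon>(k)\<close> random walk \<open>W\<close> and all
  other arms lose nothing. Every learner then has expected loss \<open>0\<close>, while the best arm gains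
  \<open>E|W\<^sub>T|/2 \<ge> \<surd>(T \<epsilon>(k)\<^sup>2/3)/2\<close>; the last bound follows from the second and fourth moments
  of the walk by H\<ouml>lder's inequality.

  Otherwise every arm \<open>j\<close> gets fair \<open>\<plusminus>\<epsilon>(j)\<close> coins, except one arm \<open>k\<close> whose coin is
  biased to mean \<open>-D\<close>, \<open>D = \<surd>(S/(128T))\<close>. Until arm \<open>k\<close> has been pulled
  \<open>M \<approx> 8T\<epsilon>(k)\<^sup>2/S\<close> times the biased and the fair environment differ by a likelihood ratio of
  second moment at most \<open>(1 + \<theta>\<^sup>2)\<^sup>M \<le> 16/15\<close>, \<open>\<theta> = D/\<epsilon>(k)\<close>, so the expected number of
  pulls of \<open>k\<close> barely moves. Averaging over \<open>k\<close> with weights \<open>\<epsilon>(k)\<^sup>2/S\<close> yields an arm \<open>k\<close>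
  that the learner pulls in at most \<open>7T/12\<close> rounds in expectation, which costs at least
  \<open>5 D T/12 \<ge> \<surd>(T S)/30\<close>.\<close>

abbreviation E :: "'a pmf \<Rightarrow> ('a \<Rightarrow> real) \<Rightarrow> real" where
  "E p f \<equiv> measure_pmf.expectation p f"

section \<open>Expectations under finitely supported distributions\<close>

lemma expectation_finite_eq_sum:
  assumes "finite (set_pmf p)"
  shows "E p f = (\<Sum>x\<in>set_pmf p. pmf p x * f x)"
  by (subst integral_measure_pmf[of "set_pmf p"]) (auto simp: assms)

lemma expectation_finite_mono:
  assumes "finite (set_pmf p)" "\<And>x. x \<in> set_pmf p \<Longrightarrow> f x \<le> g x"
  shows "E p f \<le> E p g"
  unfolding expectation_finite_eq_sum[OF assms(1)] by (intro sum_mono mult_left_mono assms(2)) auto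

lemma expectation_finite_cong:
  assumes "finite (set_pmf p)" "\<And>x. x \<in> set_pmf p \<Longrightarrow> f x = g x"
  shows "E p f = E p g"
  unfolding expectation_finite_eq_sum[OF assms(1)] by (intro sum.cong) (auto simp: assms(2))

lemma expectation_finite_add:
  assumes "finite (set_pmf p)"
  shows "E p (\<lambda>x. f x + g x) = E p f + E p g"
  unfolding expectation_finite_eq_sum[OF assms] by (simp add: sum.distrib algebra_simps)

lemma expectation_finite_diff:
  assumes "finite (set_pmf p)"
  shows "E p (\<lambda>x. f x - g x) = E p f - E p g"
  unfolding expectation_finite_eq_sum[OF assms] by (simp add: sum_subtractf algebra_simps)

lemma expectation_finite_cmult:
  assumes "finite (set_pmf p)"
  shows "E p (\<lambda>x. c * f x) = c * E p f"
  unfolding expectation_finite_eq_sum[OF assms] by (simp add: sum_distrib_left algebra_simps)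

lemma expectation_finite_sum_distrib:
  assumes "finite (set_pmf p)"
  shows "E p (\<lambda>x. \<Sum>k\<in>J. f k x) = (\<Sum>k\<in>J. E p (f k))"
  unfolding expectation_finite_eq_sum[OF assms] by (simp add: sum_distrib_left sum.swap[of _ J])

lemma expectation_bind_finite:
  assumes "finite (set_pmf p)" "\<And>x. x \<in> set_pmf p \<Longrightarrow> finite (set_pmf (f x))"
  shows "E (bind_pmf p f) h = E p (\<lambda>x. E (f x) h)"
  by (subst pmf_expectation_bind[of "set_pmf p"]) (auto simp: assms expectation_finite_eq_sum)

lemma expectation_finite_abs_le:
  assumes "finite (set_pmf p)"
  shows "\<bar>E p f\<bar> \<le> E p (\<lambda>x. \<bar>f x\<bar>)"
proof -
  have "E p f \<le> E p (\<lambda>x. \<bar>f x\<bar>)" "E p (\<lambda>x. (-1) * f x) \<le> E p (\<lambda>x. \<bar>f x\<bar>)"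
    by (rule expectation_finite_mono[OF assms], simp)+
  then show ?thesis unfolding expectation_finite_cmult[OF assms] by linarith
qed

lemma expectation_finite_Cauchy_Schwarz:
  assumes "finite (set_pmf p)"
  shows "(E p (\<lambda>x. f x * g x))\<^sup>2 \<le> E p (\<lambda>x. (f x)\<^sup>2) * E p (\<lambda>x. (g x)\<^sup>2)"
proof -
  have "(\<Sum>x\<in>set_pmf p. (sqrt (pmf p x) * f x) * (sqrt (pmf p x) * g x))\<^sup>2
      \<le> (\<Sum>x\<in>set_pmf p. (sqrt (pmf p x) * f x)\<^sup>2) * (\<Sum>x\<in>set_pmf p. (sqrt (pmf p x) * g x)\<^sup>2)"
    by (rule Cauchy_Schwarz_ineq_sum)
  then show ?thesis unfolding expectation_finite_eq_sum[OF assms]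
    by (simp add: power_mult_distrib pmf_nonneg algebra_simps)
qed

lemma expectation_finite_abs_le_sqrt:
  assumes "finite (set_pmf p)"
  shows "E p (\<lambda>x. \<bar>f x\<bar>) \<le> sqrt (E p (\<lambda>x. (f x)\<^sup>2))"
  using expectation_finite_Cauchy_Schwarz[OF assms, of "\<lambda>x. \<bar>f x\<bar>" "\<lambda>_. 1"]
  by (simp add: real_le_rsqrt)

text \<open>H\<ouml>lder's inequality \<open>E f\<^sup>2 \<le> (E |f|)\<^bsup>2/3\<^esup> (E f\<^sup>4)\<^bsup>1/3\<^esup>\<close>, cubed.\<close>

lemma expectation_finite_square_cube_le:
  assumes fin: "finite (set_pmf p)"
  shows "(E p (\<lambda>x. (f x)\<^sup>2))^3 \<le> (E p (\<lambda>x. \<bar>f x\<bar>))\<^sup>2 * E p (\<lambda>x. (f x)^4)"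
proof -
  define a where "a = E p (\<lambda>x. \<bar>f x\<bar>)"
  define b where "b = E p (\<lambda>x. \<bar>f x\<bar>^3)"
  define m2 where "m2 = E p (\<lambda>x. (f x)\<^sup>2)"
  define m4 where "m4 = E p (\<lambda>x. (f x)^4)"
  have "(E p (\<lambda>x. sqrt \<bar>f x\<bar> * (sqrt \<bar>f x\<bar> * \<bar>f x\<bar>)))\<^sup>2
      \<le> E p (\<lambda>x. (sqrt \<bar>f x\<bar>)\<^sup>2) * E p (\<lambda>x. (sqrt \<bar>f x\<bar> * \<bar>f x\<bar>)\<^sup>2)"
    by (rule expectation_finite_Cauchy_Schwarz[OF fin])
  moreover have "sqrt \<bar>y\<bar> * (sqrt \<bar>y\<bar> * \<bar>y\<bar>) = y\<^sup>2" for y :: real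
  proof -
    have "sqrt \<bar>y\<bar> * (sqrt \<bar>y\<bar> * \<bar>y\<bar>) = (sqrt \<bar>y\<bar> * sqrt \<bar>y\<bar>) * \<bar>y\<bar>"
      by (rule mult.assoc[symmetric])
    then show ?thesis by (simp add: power2_eq_square)
  qed
  moreover have "(sqrt \<bar>y\<bar> * \<bar>y\<bar>)\<^sup>2 = \<bar>y\<bar>^3" for y :: real
    by (simp add: power_mult_distrib) (simp add: power3_eq_cube power2_eq_square)
  ultimately have ab: "m2\<^sup>2 \<le> a * b" by (simp add: a_def b_def m2_def)
  have "(E p (\<lambda>x. \<bar>f x\<bar> * (f x)\<^sup>2))\<^sup>2 \<le> E p (\<lambda>x. \<bar>f x\<bar>\<^sup>2) * E p (\<lambda>x. ((f x)\<^sup>2)\<^sup>2)"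
    by (rule expectation_finite_Cauchy_Schwarz[OF fin])
  moreover have "\<bar>y\<bar> * y\<^sup>2 = \<bar>y\<bar>^3" for y :: real
    by (simp add: power3_eq_cube power2_eq_square)
  ultimately have b2: "b\<^sup>2 \<le> m2 * m4" by (simp add: b_def m2_def m4_def flip: power_mult)
  have m2: "m2 \<ge> 0" "a \<ge> 0" unfolding m2_def a_def by (simp_all add: integral_nonneg_AE)
  have "m2 * m2^3 = (m2\<^sup>2)\<^sup>2" by (simp add: power2_eq_square power3_eq_cube)
  also have "\<dots> \<le> (a * b)\<^sup>2" using ab m2 by (intro power_mono) auto
  also have "\<dots> = a\<^sup>2 * b\<^sup>2" by (simp add: power_mult_distrib)
  also have "\<dots> \<le> a\<^sup>2 * (m2 * m4)" using b2 by (intro mult_left_mono) auto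
  finally have "m2 * m2^3 \<le> m2 * (a\<^sup>2 * m4)" by (simp add: algebra_simps)
  then have "m2^3 \<le> a\<^sup>2 * m4" if "m2 > 0" using that by simp
  moreover have "m2^3 \<le> a\<^sup>2 * m4" if "m2 = 0"
    using that by (simp add: m4_def integral_nonneg_AE)
  ultimately have "m2^3 \<le> a\<^sup>2 * m4" using m2(1) by fastforce
  then show ?thesis by (simp add: a_def m2_def m4_def)
qed

lemma exists_ge_expectation_finite:
  assumes fin: "finite (set_pmf p)" and le: "B \<le> E p f"
  shows "\<exists>x\<in>set_pmf p. B \<le> f x"
proof (rule ccontr)
  assume "\<not> ?thesis"
  then have "(\<Sum>x\<in>set_pmf p. pmf p x * f x) < (\<Sum>x\<in>set_pmf p. pmf p x * B)"
    by (intro sum_strict_mono[OF fin set_pmf_not_empty]) (auto simp: pmf_positive)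
  also have "\<dots> = B" using sum_pmf_eq_1[OF fin] by (simp add: sum_distrib_right[symmetric])
  finally show False using le unfolding expectation_finite_eq_sum[OF fin] by simp
qed

section \<open>Learners interacting with random environments\<close>

fun interaction ::
  "(('a \<times> 'o) list \<Rightarrow> 'a pmf) \<Rightarrow> (nat \<Rightarrow> ('a \<times> 'o) list \<Rightarrow> 'a \<Rightarrow> 'o pmf) \<Rightarrow> nat \<Rightarrow> ('a \<times> 'o) list pmf"
where
  "interaction A F 0 = return_pmf []"
| "interaction A F (Suc t) =
     bind_pmf (interaction A F t) (\<lambda>h. bind_pmf (A h) (\<lambda>i. map_pmf (\<lambda>y. h @ [(i, y)]) (F (Suc t) h i)))"

lemma length_interaction: "h \<in> set_pmf (interaction A F t) \<Longrightarrow> length h = t"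
  by (induction t arbitrary: h) auto

lemma finite_interaction:
  assumes "\<And>h. finite (set_pmf (A h))" "\<And>s h i. finite (set_pmf (F s h i))"
  shows "finite (set_pmf (interaction A F t))"
  by (induction t) (auto simp: assms)

lemma expectation_interaction_Suc:
  assumes "\<And>h. finite (set_pmf (A h))" "\<And>s h i. finite (set_pmf (F s h i))"
  shows "E (interaction A F (Suc t)) f =
     E (interaction A F t) (\<lambda>h. E (A h) (\<lambda>i. E (F (Suc t) h i) (\<lambda>y. f (h @ [(i, y)]))))"
  by (simp add: expectation_bind_finite finite_interaction assms)

lemma interaction_cong:
  assumes "\<And>s h i. i \<in> set_pmf (A h) \<Longrightarrow> F s h i = F' s h i"
  shows "interaction A F t = interaction A F' t"
  by (induction t) (auto intro!: bind_pmf_cong simp: assms)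

lemma bandit_hist_eq_interaction: "bandit_hist A l t = interaction A (\<lambda>s h i. return_pmf (l s i)) t"
  by (induction t) (simp_all add: map_pmf_def bind_return_pmf)

lemma full_hist_eq_interaction: "full_hist A l t = interaction A (\<lambda>s h i. return_pmf (l s)) t"
  by (induction t) (simp_all add: map_pmf_def bind_return_pmf)

lemma finite_bandit_learner: "valid_bandit_learner K A \<Longrightarrow> finite (set_pmf (A h))"
  unfolding valid_bandit_learner_def by (meson finite_atLeastAtMost finite_subset)

lemma finite_full_learner: "valid_full_learner K A \<Longrightarrow> finite (set_pmf (A h))"
  unfolding valid_full_learner_def by (meson finite_atLeastAtMost finite_subset)

lemma sum_snoc: "(\<Sum>s<length (h @ [x]). f ((h @ [x]) ! s)) = (\<Sum>s<length h. f (h ! s)) + (f x :: real)"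
  by (simp add: nth_append)

lemma expectation_interaction_feedback_sum:
  fixes g :: "'a \<Rightarrow> 'o \<Rightarrow> real"
  assumes finA: "\<And>h. finite (set_pmf (A h))" and finF: "\<And>s h i. finite (set_pmf (F s h i))"
    and mean: "\<And>s h i. i \<in> set_pmf (A h) \<Longrightarrow> E (F s h i) (g i) = \<mu> i"
  shows "E (interaction A F t) (\<lambda>h. \<Sum>s<length h. g (fst (h ! s)) (snd (h ! s)))
       = E (interaction A F t) (\<lambda>h. \<Sum>s<length h. \<mu> (fst (h ! s)))"
proof (induction t)
  case 0
  then show ?case by simp
next
  case (Suc t)
  have fin: "finite (set_pmf (interaction A F t))" by (rule finite_interaction[OF finA finF])
  have step: "E (A h) (\<lambda>i. E (F (Suc t) h i) (\<lambda>y. c + g i y)) = c + E (A h) \<mu>" for h c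
  proof -
    have "E (A h) (\<lambda>i. E (F (Suc t) h i) (\<lambda>y. c + g i y)) = E (A h) (\<lambda>i. c + \<mu> i)"
      by (intro expectation_finite_cong[OF finA]) (simp add: expectation_finite_add[OF finF] mean)
    then show ?thesis by (simp add: expectation_finite_add[OF finA])
  qed
  have "E (interaction A F (Suc t)) (\<lambda>h. \<Sum>s<length h. g (fst (h ! s)) (snd (h ! s)))
      = E (interaction A F t) (\<lambda>h. (\<Sum>s<length h. g (fst (h ! s)) (snd (h ! s))) + E (A h) \<mu>)"
    unfolding expectation_interaction_Suc[OF finA finF]
    by (simp only: sum_snoc[where f="\<lambda>x. g (fst x) (snd x)"] fst_conv snd_conv step)
  also have "\<dots> = E (interaction A F t) (\<lambda>h. (\<Sum>s<length h. \<mu> (fst (h ! s))) + E (A h) \<mu>)"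
    by (simp add: expectation_finite_add[OF fin] Suc)
  also have "\<dots> = E (interaction A F (Suc t)) (\<lambda>h. \<Sum>s<length h. \<mu> (fst (h ! s)))"
    unfolding expectation_interaction_Suc[OF finA finF]
    by (simp only: sum_snoc[where f="\<lambda>x. \<mu> (fst x)"] fst_conv) (simp add: expectation_finite_add[OF finA])
  finally show ?case .
qed

section \<open>Random loss assignments\<close>

fun loss_prior :: "(nat \<Rightarrow> (nat \<Rightarrow> real) pmf) \<Rightarrow> nat \<Rightarrow> (nat \<Rightarrow> nat \<Rightarrow> real) pmf" where
  "loss_prior D 0 = return_pmf (\<lambda>_ _. 0)"
| "loss_prior D (Suc t) = bind_pmf (loss_prior D t) (\<lambda>l. map_pmf (\<lambda>r. l(Suc t := r)) (D (Suc t)))"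

lemma finite_loss_prior: "(\<And>s. finite (set_pmf (D s))) \<Longrightarrow> finite (set_pmf (loss_prior D t))"
  by (induction t) auto

lemma loss_prior_support: "l \<in> set_pmf (loss_prior D t) \<Longrightarrow> s \<in> {1..t} \<Longrightarrow> l s \<in> set_pmf (D s)"
proof (induction t arbitrary: l)
  case 0
  then show ?case by simp
next
  case (Suc t)
  then obtain l' r where "l = l'(Suc t := r)" "l' \<in> set_pmf (loss_prior D t)" "r \<in> set_pmf (D (Suc t))"
    by auto
  then show ?case using Suc by (cases "s = Suc t") auto
qed

lemma expectation_loss_prior_Suc:
  assumes "\<And>s. finite (set_pmf (D s))"
  shows "E (loss_prior D (Suc t)) f = E (loss_prior D t) (\<lambda>l. E (D (Suc t)) (\<lambda>r. f (l(Suc t := r))))"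
  by (simp add: expectation_bind_finite finite_loss_prior assms)

lemma exists_loss_in_box_ge_expectation:
  assumes "\<And>s. finite (set_pmf (D s))" "B \<le> E (loss_prior D T) R"
    and "\<And>s r j. r \<in> set_pmf (D s) \<Longrightarrow> j \<in> {1..K} \<Longrightarrow> \<bar>r j\<bar> \<le> \<epsilon> j"
  shows "\<exists>l. (\<forall>t\<in>{1..T}. \<forall>j\<in>{1..K}. \<bar>l t j\<bar> \<le> \<epsilon> j) \<and> B \<le> R l"
  using exists_ge_expectation_finite[OF finite_loss_prior assms(2)] assms(1,3) loss_prior_support
  by blast

lemma sum_fun_upd_Suc: "(\<Sum>s=1..Suc t. (l(Suc t := r)) s k) = (\<Sum>s=1..t. l s k) + (r k :: real)"
proof -
  have "(\<Sum>s=1..t. (l(Suc t := r)) s k) = (\<Sum>s=1..t. l s k)"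
    by (intro sum.cong) auto
  then show ?thesis by (simp add: atLeastAtMostSuc_conv)
qed

lemma expectation_loss_prior_cumulative:
  assumes finD: "\<And>s. finite (set_pmf (D s))" and mean: "\<And>s. E (D s) (\<lambda>r. r k) = c"
  shows "E (loss_prior D t) (\<lambda>l. \<Sum>s=1..t. l s k) = real t * c"
proof (induction t)
  case 0
  then show ?case by simp
next
  case (Suc t)
  have fin: "finite (set_pmf (loss_prior D t))" by (rule finite_loss_prior[OF finD])
  have "E (loss_prior D (Suc t)) (\<lambda>l. \<Sum>s=1..Suc t. l s k) = E (loss_prior D t) (\<lambda>l. (\<Sum>s=1..t. l s k) + c)"
    unfolding expectation_loss_prior_Suc[OF finD] sum_fun_upd_Suc
    by (intro expectation_finite_cong[OF fin]) (simp add: expectation_finite_add[OF finD] mean)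
  also have "\<dots> = real (Suc t) * c"
    unfolding expectation_finite_add[OF fin] Suc.IH by (simp add: algebra_simps)
  finally show ?case .
qed

lemma interaction_feedback_local:
  "(\<And>s. s \<in> {1..t} \<Longrightarrow> l s = l' s) \<Longrightarrow>
   interaction A (\<lambda>s h i. return_pmf (obs (l s) i)) t = interaction A (\<lambda>s h i. return_pmf (obs (l' s) i)) t"
  by (induction t) auto

text \<open>Playing against a loss assignment drawn from \<open>loss_prior D\<close> is the same as playing against
  the environment that draws a fresh row from \<open>D s\<close> at each round \<open>s\<close>: the learner never sees a
  row before it is used.\<close>

lemma bind_loss_prior_interaction:
  "bind_pmf (loss_prior D t) (\<lambda>l. interaction A (\<lambda>s h i. return_pmf (obs (l s) i)) t)
     = interaction A (\<lambda>s h i. map_pmf (\<lambda>r. obs r i) (D s)) t"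
proof (induction t)
  case 0
  then show ?case by simp
next
  case (Suc t)
  let ?I = "\<lambda>l. interaction A (\<lambda>s h i. return_pmf (obs (l s) i)) t"
  have local: "interaction A (\<lambda>s h i. return_pmf (obs (if s = Suc t then r else l s) i)) t = ?I l" for l r
    by (rule interaction_feedback_local[where l="\<lambda>s. if s = Suc t then r else l s" and l'=l]) auto
  have "bind_pmf (loss_prior D (Suc t)) (\<lambda>l. interaction A (\<lambda>s h i. return_pmf (obs (l s) i)) (Suc t))
     = bind_pmf (loss_prior D t) (\<lambda>l. bind_pmf (D (Suc t)) (\<lambda>r.
         bind_pmf (?I l) (\<lambda>h. bind_pmf (A h) (\<lambda>i. return_pmf (h @ [(i, obs r i)])))))"
    by (simp add: local bind_assoc_pmf bind_return_pmf map_pmf_def)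
  also have "\<dots> = bind_pmf (loss_prior D t) (\<lambda>l. bind_pmf (?I l) (\<lambda>h. bind_pmf (A h) (\<lambda>i.
         bind_pmf (D (Suc t)) (\<lambda>r. return_pmf (h @ [(i, obs r i)])))))"
    by (simp add: bind_commute_pmf[of "D (Suc t)"])
  also have "\<dots> = bind_pmf (bind_pmf (loss_prior D t) ?I)
       (\<lambda>h. bind_pmf (A h) (\<lambda>i. map_pmf (\<lambda>y. h @ [(i, y)]) (map_pmf (\<lambda>r. obs r i) (D (Suc t)))))"
    by (simp add: bind_assoc_pmf map_pmf_def bind_return_pmf)
  also have "\<dots> = interaction A (\<lambda>s h i. map_pmf (\<lambda>r. obs r i) (D s)) (Suc t)"
    by (simp add: Suc)
  finally show ?case .
qed

lemma expectation_bandit_exp_loss_prior: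
  assumes valid: "valid_bandit_learner K A" and finD: "\<And>s. finite (set_pmf (D s))"
  shows "E (loss_prior D T) (\<lambda>l. bandit_exp_loss A l T)
     = E (interaction A (\<lambda>s h i. map_pmf (\<lambda>r. r i) (D s)) T) (\<lambda>h. \<Sum>k<length h. snd (h ! k))"
proof -
  have "E (loss_prior D T) (\<lambda>l. bandit_exp_loss A l T)
     = E (bind_pmf (loss_prior D T) (\<lambda>l. interaction A (\<lambda>s h i. return_pmf (l s i)) T))
         (\<lambda>h. \<Sum>k<length h. snd (h ! k))"
    unfolding bandit_exp_loss_def bandit_hist_eq_interaction
    by (subst expectation_bind_finite)
      (auto simp: finite_loss_prior finD intro!: finite_interaction finite_bandit_learner[OF valid])
  then show ?thesis
    using bind_loss_prior_interaction[where obs="\<lambda>r i. r i" and D=D and A=A and t=T] by simp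
qed

lemma expectation_full_exp_loss_prior:
  assumes valid: "valid_full_learner K A" and finD: "\<And>s. finite (set_pmf (D s))"
  shows "E (loss_prior D T) (\<lambda>l. full_exp_loss A l T)
     = E (interaction A (\<lambda>s h i. D s) T) (\<lambda>h. \<Sum>k<length h. snd (h ! k) (fst (h ! k)))"
proof -
  have "E (loss_prior D T) (\<lambda>l. full_exp_loss A l T)
     = E (bind_pmf (loss_prior D T) (\<lambda>l. interaction A (\<lambda>s h i. return_pmf (l s)) T))
         (\<lambda>h. \<Sum>k<length h. snd (h ! k) (fst (h ! k)))"
    unfolding full_exp_loss_def full_hist_eq_interaction
    by (subst expectation_bind_finite)
      (auto simp: finite_loss_prior finD intro!: finite_interaction finite_full_learner[OF valid])
  then show ?thesis
    using bind_loss_prior_interaction[where obs="\<lambda>r i. r" and D=D and A=A and t=T] by simp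
qed

lemma best_arm_loss_le: "k \<in> {1..K} \<Longrightarrow> best_arm_loss K l T \<le> (\<Sum>t=1..T. l t k)"
  unfolding best_arm_loss_def by (rule Min_le) auto

definition sign_coin :: "real \<Rightarrow> real \<Rightarrow> real pmf" where
  "sign_coin \<theta> e = map_pmf (\<lambda>b. if b then e else -e) (bernoulli_pmf ((1 - \<theta>) / 2))"

lemma finite_sign_coin: "finite (set_pmf (sign_coin \<theta> e))"
  unfolding sign_coin_def by simp

lemma expectation_sign_coin:
  "0 \<le> \<theta> \<Longrightarrow> \<theta> \<le> 1 \<Longrightarrow> E (sign_coin \<theta> e) f = (1 - \<theta>) / 2 * f e + (1 + \<theta>) / 2 * f (-e)"
  unfolding sign_coin_def by (auto simp: field_simps)

lemma expectation_fair_sign_coin: "E (sign_coin 0 e) f = (f e + f (-e)) / 2"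
  by (simp add: expectation_sign_coin)

lemma sign_coin_support: "y \<in> set_pmf (sign_coin \<theta> e) \<Longrightarrow> \<bar>y\<bar> = \<bar>e\<bar>"
  unfolding sign_coin_def by auto

fun indep_row :: "(nat \<Rightarrow> real pmf) \<Rightarrow> nat \<Rightarrow> (nat \<Rightarrow> real) pmf" where
  "indep_row g 0 = return_pmf (\<lambda>_. 0)"
| "indep_row g (Suc n) = bind_pmf (indep_row g n) (\<lambda>r. map_pmf (\<lambda>y. r(Suc n := y)) (g (Suc n)))"

lemma finite_indep_row: "(\<And>j. finite (set_pmf (g j))) \<Longrightarrow> finite (set_pmf (indep_row g n))"
  by (induction n) auto

lemma indep_row_support: "r \<in> set_pmf (indep_row g n) \<Longrightarrow> i \<in> {1..n} \<Longrightarrow> r i \<in> set_pmf (g i)"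
proof (induction n arbitrary: r)
  case 0
  then show ?case by simp
next
  case (Suc n)
  then obtain r' y where "r = r'(Suc n := y)" "r' \<in> set_pmf (indep_row g n)" "y \<in> set_pmf (g (Suc n))"
    by auto
  then show ?case using Suc by (cases "i = Suc n") auto
qed

lemma indep_row_marginal: "i \<in> {1..n} \<Longrightarrow> map_pmf (\<lambda>r. r i) (indep_row g n) = g i"
proof (induction n)
  case 0
  then show ?case by simp
next
  case (Suc n)
  show ?case
  proof (cases "i = Suc n")
    case True
    then show ?thesis by (simp add: map_bind_pmf map_pmf_comp)
  next
    case False
    then have "map_pmf (\<lambda>r. r i) (indep_row g (Suc n)) = bind_pmf (indep_row g n) (\<lambda>r. return_pmf (r i))"
      by (simp add: map_bind_pmf map_pmf_comp)
    also have "\<dots> = map_pmf (\<lambda>r. r i) (indep_row g n)" by (simp add: map_pmf_def)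
    finally show ?thesis using False Suc by simp
  qed
qed

section \<open>A fair random walk on a single arm\<close>

definition single_arm_row :: "nat \<Rightarrow> real \<Rightarrow> (nat \<Rightarrow> real) pmf" where
  "single_arm_row k e = map_pmf (\<lambda>y j. if j = k then y else 0) (sign_coin 0 e)"

lemma finite_single_arm_row: "finite (set_pmf (single_arm_row k e))"
  unfolding single_arm_row_def by (simp add: finite_sign_coin)

lemma expectation_single_arm_row:
  "E (single_arm_row k e) f = (f (\<lambda>j. if j = k then e else 0) + f (\<lambda>j. if j = k then -e else 0)) / 2"
  unfolding single_arm_row_def by (simp add: expectation_fair_sign_coin)

lemma single_arm_row_support:
  assumes "r \<in> set_pmf (single_arm_row k e)"
  shows "j \<noteq> k \<Longrightarrow> r j = 0" and "\<bar>r k\<bar> = \<bar>e\<bar>"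
  using assms sign_coin_support unfolding single_arm_row_def by auto

abbreviation single_arm_walk :: "nat \<Rightarrow> real \<Rightarrow> nat \<Rightarrow> (nat \<Rightarrow> nat \<Rightarrow> real) pmf" where
  "single_arm_walk k e T \<equiv> loss_prior (\<lambda>_. single_arm_row k e) T"

lemma finite_single_arm_walk: "finite (set_pmf (single_arm_walk k e T))"
  by (rule finite_loss_prior[OF finite_single_arm_row])

lemma single_arm_walk_moment_1: "E (single_arm_walk k e t) (\<lambda>l. \<Sum>s=1..t. l s k) = 0"
  using expectation_loss_prior_cumulative[where D="\<lambda>_. single_arm_row k e" and k=k and c=0 and t=t]
  by (simp add: finite_single_arm_row expectation_single_arm_row)

lemma single_arm_walk_moment_2: "E (single_arm_walk k e t) (\<lambda>l. (\<Sum>s=1..t. l s k)\<^sup>2) = real t * e\<^sup>2"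
proof (induction t)
  case 0
  then show ?case by simp
next
  case (Suc t)
  have fin: "finite (set_pmf (single_arm_walk k e t))" by (rule finite_single_arm_walk)
  have "E (single_arm_walk k e (Suc t)) (\<lambda>l. (\<Sum>s=1..Suc t. l s k)\<^sup>2)
     = E (single_arm_walk k e t) (\<lambda>l. (\<Sum>s=1..t. l s k)\<^sup>2 + e\<^sup>2)"
    unfolding expectation_loss_prior_Suc[OF finite_single_arm_row] sum_fun_upd_Suc expectation_single_arm_row
    by (rule arg_cong[where f="E _"]) (simp add: fun_eq_iff power2_eq_square field_simps)
  also have "\<dots> = real (Suc t) * e\<^sup>2"
    unfolding expectation_finite_add[OF fin] Suc.IH by (simp add: algebra_simps)
  finally show ?case .
qed

lemma single_arm_walk_moment_4:
  "E (single_arm_walk k e t) (\<lambda>l. (\<Sum>s=1..t. l s k)^4) = e^4 * (3 * (real t)\<^sup>2 - 2 * real t)"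
proof (induction t)
  case 0
  then show ?case by simp
next
  case (Suc t)
  have fin: "finite (set_pmf (single_arm_walk k e t))" by (rule finite_single_arm_walk)
  have "E (single_arm_walk k e (Suc t)) (\<lambda>l. (\<Sum>s=1..Suc t. l s k)^4)
     = E (single_arm_walk k e t) (\<lambda>l. ((\<Sum>s=1..t. l s k)^4 + (6 * e\<^sup>2) * (\<Sum>s=1..t. l s k)\<^sup>2) + e^4)"
    unfolding expectation_loss_prior_Suc[OF finite_single_arm_row] sum_fun_upd_Suc expectation_single_arm_row
    by (rule arg_cong[where f="E _"]) (simp add: fun_eq_iff power4_eq_xxxx power2_eq_square field_simps)
  also have "\<dots> = E (single_arm_walk k e t) (\<lambda>l. (\<Sum>s=1..t. l s k)^4)
      + (6 * e\<^sup>2) * E (single_arm_walk k e t) (\<lambda>l. (\<Sum>s=1..t. l s k)\<^sup>2) + e^4"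
    by (simp add: expectation_finite_add[OF fin] expectation_finite_cmult[OF fin])
  also have "\<dots> = e^4 * (3 * (real (Suc t))\<^sup>2 - 2 * real (Suc t))"
    unfolding Suc.IH single_arm_walk_moment_2 by (simp add: algebra_simps power2_eq_square power4_eq_xxxx)
  finally show ?case .
qed

lemma single_arm_walk_abs:
  assumes "t > 0"
  shows "sqrt (t * e\<^sup>2 / 3) \<le> E (single_arm_walk k e t) (\<lambda>l. \<bar>\<Sum>s=1..t. l s k\<bar>)"
proof -
  define a where "a = E (single_arm_walk k e t) (\<lambda>l. \<bar>\<Sum>s=1..t. l s k\<bar>)"
  have a: "a \<ge> 0" unfolding a_def by (simp add: integral_nonneg_AE)
  have "(t * e\<^sup>2)^3 \<le> a\<^sup>2 * (e^4 * (3 * (real t)\<^sup>2 - 2 * real t))"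
    using expectation_finite_square_cube_le[OF finite_single_arm_walk, of k e t "\<lambda>l. \<Sum>s=1..t. l s k"]
    unfolding a_def single_arm_walk_moment_2 single_arm_walk_moment_4 .
  also have "\<dots> \<le> a\<^sup>2 * (e^4 * (3 * (real t)\<^sup>2))" by (intro mult_left_mono) auto
  finally have "(t * e\<^sup>2) * (t * e\<^sup>2)\<^sup>2 \<le> (3 * a\<^sup>2) * (t * e\<^sup>2)\<^sup>2"
    by (simp add: power_mult_distrib power3_eq_cube power2_eq_square power4_eq_xxxx algebra_simps)
  then have "t * e\<^sup>2 / 3 \<le> a\<^sup>2" using assms by (cases "e = 0") simp_all
  then show ?thesis using a unfolding a_def by (simp add: real_le_lsqrt)
qed

lemma best_arm_loss_single_arm_walk:
  assumes "k \<in> {1..K}" "k' \<in> {1..K}" "k \<noteq> k'" "l \<in> set_pmf (single_arm_walk k e T)"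
  shows "best_arm_loss K l T \<le> - ((\<bar>\<Sum>t=1..T. l t k\<bar> - (\<Sum>t=1..T. l t k)) / 2)"
proof -
  have "(\<Sum>t=1..T. l t k') = 0"
    using loss_prior_support[OF assms(4)] single_arm_row_support(1) assms(3) by (intro sum.neutral) fastforce
  then have "best_arm_loss K l T \<le> 0" using best_arm_loss_le[OF assms(2), of l T] by simp
  moreover have "best_arm_loss K l T \<le> (\<Sum>t=1..T. l t k)" by (rule best_arm_loss_le[OF assms(1)])
  ultimately show ?thesis by (cases "(\<Sum>t=1..T. l t k) \<ge> 0") auto
qed

text \<open>Whatever the learner does, its expected loss is \<open>0\<close>, whereas the better of arm \<open>k\<close> and
  a constant arm \<open>k'\<close> has loss \<open>min 0 W\<^sub>T = (W\<^sub>T - |W\<^sub>T|)/2\<close>.\<close>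

lemma single_arm_walk_regret:
  assumes k: "k \<in> {1..K}" "k' \<in> {1..K}" "k \<noteq> k'" and T: "T > 0"
    and loss: "E (single_arm_walk k e T) loss = 0"
  shows "sqrt (T * e\<^sup>2 / 3) / 2 \<le> E (single_arm_walk k e T) (\<lambda>l. loss l - best_arm_loss K l T)"
proof -
  let ?p = "single_arm_walk k e T"
  let ?S = "\<lambda>l. \<Sum>t=1..T. l t k"
  have fin: "finite (set_pmf ?p)" by (rule finite_single_arm_walk)
  have "E ?p (\<lambda>l. best_arm_loss K l T) \<le> E ?p (\<lambda>l. (1/2) * (?S l - \<bar>?S l\<bar>))"
  proof (rule expectation_finite_mono[OF fin])
    fix l assume "l \<in> set_pmf ?p"
    from best_arm_loss_single_arm_walk[OF k this] show "best_arm_loss K l T \<le> (1/2) * (?S l - \<bar>?S l\<bar>)"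
      by (simp add: field_simps)
  qed
  also have "\<dots> = (1/2) * (E ?p ?S - E ?p (\<lambda>l. \<bar>?S l\<bar>))"
    unfolding expectation_finite_cmult[OF fin] expectation_finite_diff[OF fin] ..
  also have "\<dots> = - (1/2) * E ?p (\<lambda>l. \<bar>?S l\<bar>)"
    unfolding single_arm_walk_moment_1 by simp
  finally show ?thesis
    using single_arm_walk_abs[OF T, where k=k and e=e] by (simp add: expectation_finite_diff[OF fin] loss)
qed

lemma single_arm_walk_bandit_regret:
  assumes valid: "valid_bandit_learner K A" and k: "k \<in> {1..K}" "k' \<in> {1..K}" "k \<noteq> k'"
    and T: "T > 0"
  shows "sqrt (T * e\<^sup>2 / 3) / 2
    \<le> E (single_arm_walk k e T) (\<lambda>l. bandit_exp_loss A l T - best_arm_loss K l T)"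
proof (rule single_arm_walk_regret[OF k T])
  show "E (single_arm_walk k e T) (\<lambda>l. bandit_exp_loss A l T) = 0"
    unfolding expectation_bandit_exp_loss_prior[OF valid finite_single_arm_row]
    by (subst expectation_interaction_feedback_sum[where \<mu>="\<lambda>_. 0"])
      (simp_all add: finite_bandit_learner[OF valid] finite_single_arm_row expectation_single_arm_row)
qed

lemma single_arm_walk_full_regret:
  assumes valid: "valid_full_learner K A" and k: "k \<in> {1..K}" "k' \<in> {1..K}" "k \<noteq> k'"
    and T: "T > 0"
  shows "sqrt (T * e\<^sup>2 / 3) / 2
    \<le> E (single_arm_walk k e T) (\<lambda>l. full_exp_loss A l T - best_arm_loss K l T)"
proof (rule single_arm_walk_regret[OF k T])
  show "E (single_arm_walk k e T) (\<lambda>l. full_exp_loss A l T) = 0"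
    unfolding expectation_full_exp_loss_prior[OF valid finite_single_arm_row]
    by (subst expectation_interaction_feedback_sum[where \<mu>="\<lambda>_. 0" and g="\<lambda>i y. y i"])
      (simp_all add: finite_full_learner[OF valid] finite_single_arm_row expectation_single_arm_row)
qed

lemma exists_other_arm:
  fixes K k :: nat
  assumes "1 < K"
  obtains k' where "k' \<in> {1..K}" "k \<noteq> k'"
proof (cases "k = 1")
  case True
  then show ?thesis using assms that[of 2] by auto
next
  case False
  then show ?thesis using assms that[of 1] by auto
qed

lemma single_arm_walk_witness:
  assumes "\<forall>j\<in>{1..K}. \<epsilon> j \<ge> 0" "k \<in> {1..K}" "B \<le> E (single_arm_walk k (\<epsilon> k) T) R"
  shows "\<exists>l. (\<forall>t\<in>{1..T}. \<forall>j\<in>{1..K}. \<bar>l t j\<bar> \<le> \<epsilon> j) \<and> B \<le> R l"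
proof (rule exists_loss_in_box_ge_expectation[OF finite_single_arm_row assms(3)])
  fix s r j assume "r \<in> set_pmf (single_arm_row k (\<epsilon> k))" "j \<in> {1..K}"
  then show "\<bar>r j\<bar> \<le> \<epsilon> j"
    using single_arm_row_support(1)[of r k "\<epsilon> k" j] single_arm_row_support(2)[of r k "\<epsilon> k"] assms(1,2) by (cases "j = k") auto
qed

definition pulls :: "'a \<Rightarrow> ('a \<times> 'o) list \<Rightarrow> nat" where
  "pulls k h = length (filter (\<lambda>x. fst x = k) h)"

lemma pulls_snoc: "pulls k (h @ [x]) = pulls k h + (if fst x = k then 1 else 0)"
  by (simp add: pulls_def)

lemma pulls_le_length: "pulls k h \<le> length h"
  by (simp add: pulls_def)

lemma sum_if_pulled: "(\<Sum>s<length h. if fst (h ! s) = k then c else 0) = c * real (pulls k h)"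
proof (induction h rule: rev_induct)
  case Nil
  then show ?case by (simp add: pulls_def)
next
  case (snoc x h)
  then show ?case
    using sum_snoc[of "\<lambda>x. if fst x = k then c else 0" h x] by (simp add: pulls_snoc algebra_simps)
qed

lemma sum_pulls_le_length: "finite J \<Longrightarrow> (\<Sum>k\<in>J. pulls k h) \<le> length h"
proof (induction h rule: rev_induct)
  case Nil
  then show ?case by (simp add: pulls_def)
next
  case (snoc x h)
  have "(\<Sum>k\<in>J. pulls k (h @ [x])) = (\<Sum>k\<in>J. pulls k h) + (\<Sum>k\<in>J. if fst x = k then 1 else 0)"
    by (simp add: pulls_snoc sum.distrib)
  also have "(\<Sum>k\<in>J. if fst x = k then 1 else (0::nat)) \<le> 1"
    using snoc.prems by (simp add: sum.If_cases)
  finally show ?case using snoc by simp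
qed

text \<open>\<open>truncate_pulls k M h\<close> is the history \<open>h\<close> cut off right after the \<open>M\<close>-th pull of \<open>k\<close>.\<close>

definition truncate_pulls :: "'a \<Rightarrow> nat \<Rightarrow> ('a \<times> 'o) list \<Rightarrow> ('a \<times> 'o) list" where
  "truncate_pulls k M h = foldl (\<lambda>u x. if M \<le> pulls k u then u else u @ [x]) [] h"

lemma truncate_pulls_snoc:
  "truncate_pulls k M (h @ [x]) =
    (if M \<le> pulls k (truncate_pulls k M h) then truncate_pulls k M h else truncate_pulls k M h @ [x])"
  by (simp add: truncate_pulls_def)

lemma pulls_truncate_pulls: "pulls k (truncate_pulls k M h) = min (pulls k h) M"
  by (induction h rule: rev_induct) (auto simp: truncate_pulls_snoc pulls_snoc truncate_pulls_def pulls_def)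

lemma truncate_pulls_id: "pulls k h < M \<Longrightarrow> truncate_pulls k M h = h"
  by (induction h rule: rev_induct) (auto simp: truncate_pulls_snoc pulls_snoc truncate_pulls_def)

lemma map_truncate_pulls_interaction_Suc:
  "map_pmf (truncate_pulls k M) (interaction A F (Suc t)) = bind_pmf (map_pmf (truncate_pulls k M) (interaction A F t))
     (\<lambda>u. if M \<le> pulls k u then return_pmf u
          else bind_pmf (A u) (\<lambda>i. map_pmf (\<lambda>y. u @ [(i, y)]) (F (Suc t) u i)))"
proof -
  have step: "bind_pmf (A h) (\<lambda>i. map_pmf (\<lambda>y. truncate_pulls k M (h @ [(i, y)])) (F (Suc t) h i)) =
    (if M \<le> pulls k (truncate_pulls k M h) then return_pmf (truncate_pulls k M h)
     else bind_pmf (A (truncate_pulls k M h))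
       (\<lambda>i. map_pmf (\<lambda>y. truncate_pulls k M h @ [(i, y)]) (F (Suc t) (truncate_pulls k M h) i)))" for h
  proof (cases "M \<le> pulls k h")
    case True
    then have "M \<le> pulls k (truncate_pulls k M h)" by (simp add: pulls_truncate_pulls)
    then show ?thesis by (simp add: truncate_pulls_snoc)
  next
    case False
    then show ?thesis by (simp add: truncate_pulls_id truncate_pulls_snoc)
  qed
  show ?thesis
    by (simp add: map_bind_pmf map_pmf_comp bind_map_pmf step cong: if_cong)
qed

lemma map_truncate_pulls_interaction_eq:
  assumes "\<And>s h i. pulls k h < M \<Longrightarrow> F1 s h i = F2 s h i"
  shows "map_pmf (truncate_pulls k M) (interaction A F1 t) = map_pmf (truncate_pulls k M) (interaction A F2 t)"
proof (induction t)
  case 0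
  then show ?case by simp
next
  case (Suc t)
  show ?case
    unfolding map_truncate_pulls_interaction_Suc Suc by (intro bind_pmf_cong[OF refl]) (auto simp: assms)
qed

section \<open>Change of measure\<close>

definition likelihood_ratio :: "(('a \<times> 'o) list \<Rightarrow> 'a \<times> 'o \<Rightarrow> real) \<Rightarrow> ('a \<times> 'o) list \<Rightarrow> real" where
  "likelihood_ratio \<rho> h = (\<Prod>s<length h. \<rho> (take s h) (h ! s))"

lemma likelihood_ratio_Nil [simp]: "likelihood_ratio \<rho> [] = 1"
  by (simp add: likelihood_ratio_def)

lemma likelihood_ratio_snoc: "likelihood_ratio \<rho> (h @ [x]) = likelihood_ratio \<rho> h * \<rho> h x"
proof -
  have "(\<Prod>s<length h. \<rho> (take s (h @ [x])) ((h @ [x]) ! s)) = likelihood_ratio \<rho> h"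
    unfolding likelihood_ratio_def by (intro prod.cong) (auto simp: nth_append)
  then show ?thesis by (simp add: likelihood_ratio_def)
qed

lemma expectation_interaction_change_of_measure:
  assumes finA: "\<And>h. finite (set_pmf (A h))"
    and finF: "\<And>s h i. finite (set_pmf (F s h i))" and finG: "\<And>s h i. finite (set_pmf (G s h i))"
    and density: "\<And>s h i \<phi>. E (G s h i) \<phi> = E (F s h i) (\<lambda>y. \<rho> h (i, y) * \<phi> y)"
  shows "E (interaction A G t) f = E (interaction A F t) (\<lambda>h. likelihood_ratio \<rho> h * f h)"
proof (induction t arbitrary: f)
  case 0
  then show ?case by simp
next
  case (Suc t)
  let ?L = "likelihood_ratio \<rho>"
  have inner: "?L h * E (G (Suc t) h i) \<phi> = E (F (Suc t) h i) (\<lambda>y. ?L (h @ [(i, y)]) * \<phi> y)" for h i \<phi>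
  proof -
    have "?L h * E (G (Suc t) h i) \<phi> = E (F (Suc t) h i) (\<lambda>y. ?L h * (\<rho> h (i, y) * \<phi> y))"
      unfolding density expectation_finite_cmult[OF finF] ..
    then show ?thesis by (simp add: likelihood_ratio_snoc mult.assoc)
  qed
  have step: "?L h * E (A h) (\<lambda>i. E (G (Suc t) h i) (\<lambda>y. f (h @ [(i, y)])))
    = E (A h) (\<lambda>i. E (F (Suc t) h i) (\<lambda>y. ?L (h @ [(i, y)]) * f (h @ [(i, y)])))" for h
    unfolding expectation_finite_cmult[OF finA, symmetric] inner ..
  show ?case
    unfolding expectation_interaction_Suc[OF finA finG] expectation_interaction_Suc[OF finA finF] Suc.IH step ..
qed

lemma expectation_interaction_change_of_measure_diff_le:
  assumes finA: "\<And>h. finite (set_pmf (A h))"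
    and finF: "\<And>s h i. finite (set_pmf (F s h i))" and finG: "\<And>s h i. finite (set_pmf (G s h i))"
    and density: "\<And>s h i \<phi>. E (G s h i) \<phi> = E (F s h i) (\<lambda>y. \<rho> h (i, y) * \<phi> y)"
    and chi2: "E (interaction A F t) (\<lambda>h. (likelihood_ratio \<rho> h - 1)\<^sup>2) \<le> C"
    and bound: "\<And>h. h \<in> set_pmf (interaction A F t) \<Longrightarrow> \<bar>f h\<bar> \<le> B"
  shows "\<bar>E (interaction A G t) f - E (interaction A F t) f\<bar> \<le> B * sqrt C"
proof -
  let ?p = "interaction A F t"
  let ?L = "likelihood_ratio \<rho>"
  have fin: "finite (set_pmf ?p)" by (rule finite_interaction[OF finA finF])
  obtain h0 where "h0 \<in> set_pmf ?p" using set_pmf_not_empty by fastforce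
  then have B: "B \<ge> 0" using bound[of h0] by linarith
  have "\<bar>E (interaction A G t) f - E ?p f\<bar> = \<bar>E ?p (\<lambda>h. (?L h - 1) * f h)\<bar>"
    unfolding expectation_interaction_change_of_measure[OF finA finF finG density]
    by (simp add: expectation_finite_diff[OF fin, symmetric] algebra_simps)
  also have "\<dots> \<le> E ?p (\<lambda>h. \<bar>(?L h - 1) * f h\<bar>)"
    by (rule expectation_finite_abs_le[OF fin])
  also have "\<dots> \<le> E ?p (\<lambda>h. B * \<bar>?L h - 1\<bar>)"
  proof (rule expectation_finite_mono[OF fin])
    fix h assume "h \<in> set_pmf ?p"
    then have "\<bar>?L h - 1\<bar> * \<bar>f h\<bar> \<le> \<bar>?L h - 1\<bar> * B" using bound by (intro mult_left_mono) auto
    then show "\<bar>(?L h - 1) * f h\<bar> \<le> B * \<bar>?L h - 1\<bar>" by (simp add: abs_mult mult.commute)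
  qed
  also have "\<dots> \<le> B * sqrt (E ?p (\<lambda>h. (?L h - 1)\<^sup>2))"
    unfolding expectation_finite_cmult[OF fin] by (intro mult_left_mono expectation_finite_abs_le_sqrt[OF fin] B)
  also have "\<dots> \<le> B * sqrt C"
    by (intro mult_left_mono real_sqrt_le_mono chi2 B)
  finally show ?thesis .
qed

section \<open>One arm with a biased coin\<close>

text \<open>In the environment \<open>biased_env\<close> arm \<open>k\<close> has mean loss \<open>-\<theta> \<epsilon>(k)\<close> and all other arms mean
  loss \<open>0\<close>; \<open>stopped_env\<close> agrees with it until arm \<open>k\<close> has been pulled \<open>M\<close> times and with the
  fair environment afterwards, which keeps its likelihood ratio bounded in \<open>L\<^sup>2\<close>.\<close>

locale biased_arm =
  fixes A :: bandit_learner and K :: nat and \<epsilon> :: "nat \<Rightarrow> real" and k :: nat and \<theta> :: real and M :: nat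
  assumes valid: "valid_bandit_learner K A" and arm: "k \<in> {1..K}" and pos: "\<epsilon> k > 0"
    and \<theta>: "0 \<le> \<theta>" "\<theta> \<le> 1"
begin

abbreviation fair_env :: "nat \<Rightarrow> (nat \<times> real) list \<Rightarrow> nat \<Rightarrow> real pmf" where
  "fair_env \<equiv> \<lambda>s h i. sign_coin 0 (\<epsilon> i)"

definition biased_row :: "nat \<Rightarrow> real pmf" where
  "biased_row j = (if j = k then sign_coin \<theta> (\<epsilon> k) else sign_coin 0 (\<epsilon> j))"

abbreviation biased_env :: "nat \<Rightarrow> (nat \<times> real) list \<Rightarrow> nat \<Rightarrow> real pmf" where
  "biased_env \<equiv> \<lambda>s h i. biased_row i"

definition stopped_env :: "nat \<Rightarrow> (nat \<times> real) list \<Rightarrow> nat \<Rightarrow> real pmf" where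
  "stopped_env s h i = (if i = k \<and> pulls k h < M then sign_coin \<theta> (\<epsilon> k) else sign_coin 0 (\<epsilon> i))"

definition lr_factor :: "(nat \<times> real) list \<Rightarrow> nat \<times> real \<Rightarrow> real" where
  "lr_factor h x = (if fst x = k \<and> pulls k h < M then 1 - \<theta> * snd x / \<epsilon> k else 1)"

abbreviation L :: "(nat \<times> real) list \<Rightarrow> real" where
  "L \<equiv> likelihood_ratio lr_factor"

lemma finite_learner: "finite (set_pmf (A h))"
  by (rule finite_bandit_learner[OF valid])

lemma finite_biased_row: "finite (set_pmf (biased_row j))"
  unfolding biased_row_def by (simp add: finite_sign_coin)

lemma finite_stopped_env: "finite (set_pmf (stopped_env s h i))"
  unfolding stopped_env_def by (simp add: finite_sign_coin)

lemma finite_fair_interaction: "finite (set_pmf (interaction A fair_env t))"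
  by (rule finite_interaction[OF finite_learner finite_sign_coin])

lemma finite_biased_interaction: "finite (set_pmf (interaction A biased_env t))"
  by (rule finite_interaction[OF finite_learner finite_biased_row])

lemma stopped_env_density: "E (stopped_env s h i) \<phi> = E (fair_env s h i) (\<lambda>y. lr_factor h (i, y) * \<phi> y)"
proof (cases "i = k \<and> pulls k h < M")
  case True
  then show ?thesis using pos
    by (simp add: stopped_env_def lr_factor_def expectation_sign_coin[OF \<theta>] expectation_fair_sign_coin
        field_simps)
next
  case False
  then have "stopped_env s h i = sign_coin 0 (\<epsilon> i)" and "\<And>y. lr_factor h (i, y) = 1"
    by (auto simp: stopped_env_def lr_factor_def)
  then show ?thesis by simp
qed

text \<open>\<open>L\<^sup>2\<close> times \<open>(1 + \<theta>\<^sup>2)\<close> to the number of remaining biased pulls is a martingale under the fair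
  environment.\<close>

lemma likelihood_ratio_potential_step:
  "E (sign_coin 0 (\<epsilon> i)) (\<lambda>y. (L (h @ [(i, y)]))\<^sup>2 * (1 + \<theta>\<^sup>2) ^ (M - min (pulls k (h @ [(i, y)])) M))
    = (L h)\<^sup>2 * (1 + \<theta>\<^sup>2) ^ (M - min (pulls k h) M)"
proof (cases "i = k \<and> pulls k h < M")
  case True
  then have i: "i = k" and c: "pulls k h < M" by auto
  let ?c = "(L h)\<^sup>2 * (1 + \<theta>\<^sup>2) ^ (M - Suc (pulls k h))"
  have "E (sign_coin 0 (\<epsilon> i)) (\<lambda>y. (L (h @ [(i, y)]))\<^sup>2 * (1 + \<theta>\<^sup>2) ^ (M - min (pulls k (h @ [(i, y)])) M))
      = E (sign_coin 0 (\<epsilon> i)) (\<lambda>y. ?c * (1 - \<theta> * y / \<epsilon> k)\<^sup>2)"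
    by (intro arg_cong[where f="E _"])
      (simp add: fun_eq_iff i c likelihood_ratio_snoc lr_factor_def pulls_snoc power_mult_distrib mult_ac min_def)
  also have "\<dots> = ?c * (1 + \<theta>\<^sup>2)"
    using pos by (simp add: i expectation_fair_sign_coin power2_eq_square field_simps)
  also have "\<dots> = (L h)\<^sup>2 * (1 + \<theta>\<^sup>2) ^ (M - min (pulls k h) M)"
  proof -
    have "M - min (pulls k h) M = Suc (M - Suc (pulls k h))" using c by simp
    then show ?thesis by (simp only: power_Suc2 mult.assoc)
  qed
  finally show ?thesis .
next
  case False
  then have "(L (h @ [(i, y)]))\<^sup>2 * (1 + \<theta>\<^sup>2) ^ (M - min (pulls k (h @ [(i, y)])) M)
      = (L h)\<^sup>2 * (1 + \<theta>\<^sup>2) ^ (M - min (pulls k h) M)" for y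
    by (auto simp: likelihood_ratio_snoc lr_factor_def pulls_snoc)
  then show ?thesis by simp
qed

lemma expectation_likelihood_ratio_potential:
  "E (interaction A fair_env t) (\<lambda>h. (L h)\<^sup>2 * (1 + \<theta>\<^sup>2) ^ (M - min (pulls k h) M)) = (1 + \<theta>\<^sup>2) ^ M"
proof (induction t)
  case 0
  then show ?case by (simp add: pulls_def)
next
  case (Suc t)
  then show ?case
    unfolding expectation_interaction_Suc[OF finite_learner finite_sign_coin] likelihood_ratio_potential_step
    by simp
qed

lemma expectation_likelihood_ratio_minus_one_square:
  "E (interaction A fair_env t) (\<lambda>h. (L h - 1)\<^sup>2) \<le> (1 + \<theta>\<^sup>2) ^ M - 1"
proof -
  let ?p = "interaction A fair_env t"
  have fin: "finite (set_pmf ?p)" by (rule finite_fair_interaction)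
  have "E ?p (\<lambda>h. (L h)\<^sup>2) \<le> E ?p (\<lambda>h. (L h)\<^sup>2 * (1 + \<theta>\<^sup>2) ^ (M - min (pulls k h) M))"
    by (intro expectation_finite_mono[OF fin]) (simp add: mult_le_cancel_left1 one_le_power)
  then have L2: "E ?p (\<lambda>h. (L h)\<^sup>2) \<le> (1 + \<theta>\<^sup>2) ^ M"
    unfolding expectation_likelihood_ratio_potential .
  have L1: "E ?p L = 1"
    using expectation_interaction_change_of_measure[OF finite_learner finite_sign_coin
        finite_stopped_env stopped_env_density, where f="\<lambda>_. 1" and t=t]
    by simp
  have "E ?p (\<lambda>h. (L h - 1)\<^sup>2) = E ?p (\<lambda>h. ((L h)\<^sup>2 + (-2) * L h) + 1)"
    by (simp add: power2_eq_square algebra_simps)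
  also have "\<dots> = E ?p (\<lambda>h. (L h)\<^sup>2) + (-2) * E ?p L + 1"
    by (simp only: expectation_finite_add[OF fin] expectation_finite_cmult[OF fin] integral_const) simp
  finally show ?thesis using L1 L2 by simp
qed

lemma expectation_capped_pulls_biased_eq_stopped:
  "E (interaction A biased_env t) (\<lambda>h. real (min (pulls k h) M))
   = E (interaction A stopped_env t) (\<lambda>h. real (min (pulls k h) M))"
proof -
  have "map_pmf (truncate_pulls k M) (interaction A biased_env t)
      = map_pmf (truncate_pulls k M) (interaction A stopped_env t)"
    by (rule map_truncate_pulls_interaction_eq) (simp add: biased_row_def stopped_env_def)
  then have "E (map_pmf (truncate_pulls k M) (interaction A biased_env t)) (\<lambda>u. real (pulls k u))
      = E (map_pmf (truncate_pulls k M) (interaction A stopped_env t)) (\<lambda>u. real (pulls k u))"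
    by simp
  then show ?thesis by (simp add: pulls_truncate_pulls)
qed

text \<open>Counting pulls only up to \<open>M\<close> loses at most a factor \<open>T/M\<close>, and the capped count is a
  function bounded by \<open>M\<close> whose expectations under \<open>stopped_env\<close> and \<open>fair_env\<close> are compared by
  the \<open>\<chi>\<^sup>2\<close>-bound.\<close>

lemma expectation_pulls_biased_le:
  assumes M: "1 \<le> M" "M \<le> T"
  shows "E (interaction A biased_env T) (\<lambda>h. real (pulls k h))
     \<le> (T / M) * E (interaction A fair_env T) (\<lambda>h. real (pulls k h)) + T * sqrt ((1 + \<theta>\<^sup>2) ^ M - 1)"
proof -
  let ?C = "\<lambda>h. real (min (pulls k h) M)"
  have Mpos: "real M > 0" using M by simp
  have TM: "real T / real M \<ge> 1" using M Mpos by simp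
  have "E (interaction A biased_env T) (\<lambda>h. real (pulls k h)) \<le> E (interaction A biased_env T) (\<lambda>h. (T / M) * ?C h)"
  proof (rule expectation_finite_mono[OF finite_biased_interaction])
    fix h assume "h \<in> set_pmf (interaction A biased_env T)"
    then have "pulls k h \<le> T" using pulls_le_length[of k h] length_interaction by metis
    then show "real (pulls k h) \<le> (T / M) * ?C h"
      using TM mult_right_mono[OF TM, of "real (pulls k h)"] Mpos by (cases "pulls k h \<le> M") auto
  qed
  also have "\<dots> = (T / M) * E (interaction A stopped_env T) ?C"
    by (simp only: expectation_finite_cmult[OF finite_biased_interaction] expectation_capped_pulls_biased_eq_stopped)
  also have "\<dots> \<le> (T / M) * (E (interaction A fair_env T) ?C + M * sqrt ((1 + \<theta>\<^sup>2) ^ M - 1))"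
  proof -
    have "\<bar>E (interaction A stopped_env T) ?C - E (interaction A fair_env T) ?C\<bar> \<le> M * sqrt ((1 + \<theta>\<^sup>2) ^ M - 1)"
      by (rule expectation_interaction_change_of_measure_diff_le[where G=stopped_env,
          OF finite_learner finite_sign_coin finite_stopped_env stopped_env_density
          expectation_likelihood_ratio_minus_one_square]) simp
    then show ?thesis by (intro mult_left_mono) auto
  qed
  also have "\<dots> \<le> (T / M) * (E (interaction A fair_env T) (\<lambda>h. real (pulls k h)) + M * sqrt ((1 + \<theta>\<^sup>2) ^ M - 1))"
    by (intro mult_left_mono add_right_mono expectation_finite_mono[OF finite_fair_interaction]) auto
  also have "\<dots> = (T / M) * E (interaction A fair_env T) (\<lambda>h. real (pulls k h)) + T * sqrt ((1 + \<theta>\<^sup>2) ^ M - 1)"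
    using Mpos by (simp add: field_simps)
  finally show ?thesis .
qed

abbreviation biased_losses :: "nat \<Rightarrow> (nat \<Rightarrow> nat \<Rightarrow> real) pmf" where
  "biased_losses T \<equiv> loss_prior (\<lambda>_. indep_row biased_row K) T"

lemma expectation_biased_row: "E (biased_row i) (\<lambda>y. y) = (if i = k then - (\<theta> * \<epsilon> k) else 0)"
  by (simp add: biased_row_def expectation_sign_coin[OF \<theta>] expectation_fair_sign_coin field_simps)

lemma expectation_bandit_regret_biased:
  "\<theta> * \<epsilon> k * (T - E (interaction A biased_env T) (\<lambda>h. real (pulls k h)))
     \<le> E (biased_losses T) (\<lambda>l. bandit_exp_loss A l T - best_arm_loss K l T)"
proof -
  let ?p = "biased_losses T"
  have finR: "finite (set_pmf (indep_row biased_row K))" by (rule finite_indep_row[OF finite_biased_row])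
  have fin: "finite (set_pmf ?p)" by (rule finite_loss_prior[OF finR])
  have marginal: "interaction A (\<lambda>s h i. map_pmf (\<lambda>r. r i) (indep_row biased_row K)) T = interaction A biased_env T"
  proof (rule interaction_cong)
    fix s h i assume "i \<in> set_pmf (A h)"
    then have "i \<in> {1..K}" using valid unfolding valid_bandit_learner_def by blast
    then show "map_pmf (\<lambda>r. r i) (indep_row biased_row K) = biased_row i" by (rule indep_row_marginal)
  qed
  have "E ?p (\<lambda>l. bandit_exp_loss A l T)
      = E (interaction A biased_env T) (\<lambda>h. \<Sum>s<length h. (if fst (h ! s) = k then - (\<theta> * \<epsilon> k) else 0))"
    unfolding expectation_bandit_exp_loss_prior[OF valid finR] marginal
    by (rule expectation_interaction_feedback_sum[where g="\<lambda>i y. y", OF finite_learner finite_biased_row])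
      (simp add: expectation_biased_row)
  also have "\<dots> = - (\<theta> * \<epsilon> k) * E (interaction A biased_env T) (\<lambda>h. real (pulls k h))"
    by (simp only: sum_if_pulled expectation_finite_cmult[OF finite_biased_interaction])
  finally have learner: "E ?p (\<lambda>l. bandit_exp_loss A l T)
      = - (\<theta> * \<epsilon> k) * E (interaction A biased_env T) (\<lambda>h. real (pulls k h))" .
  have "E ?p (\<lambda>l. best_arm_loss K l T) \<le> E ?p (\<lambda>l. \<Sum>t=1..T. l t k)"
    by (rule expectation_finite_mono[OF fin best_arm_loss_le[OF arm]])
  also have "\<dots> = real T * (- (\<theta> * \<epsilon> k))"
  proof (rule expectation_loss_prior_cumulative[OF finR])
    have "E (indep_row biased_row K) (\<lambda>r. r k) = E (map_pmf (\<lambda>r. r k) (indep_row biased_row K)) (\<lambda>y. y)"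
      by simp
    also have "\<dots> = - (\<theta> * \<epsilon> k)"
      unfolding indep_row_marginal[OF arm] by (simp add: expectation_biased_row)
    finally show "E (indep_row biased_row K) (\<lambda>r. r k) = - (\<theta> * \<epsilon> k)" .
  qed
  finally have best: "E ?p (\<lambda>l. best_arm_loss K l T) \<le> real T * (- (\<theta> * \<epsilon> k))" .
  show ?thesis using learner best by (simp add: expectation_finite_diff[OF fin] algebra_simps)
qed

lemma exists_biased_loss_regret:
  assumes "1 \<le> M" "M \<le> T" and nonneg: "\<forall>j\<in>{1..K}. \<epsilon> j \<ge> 0"
  shows "\<exists>l. (\<forall>t\<in>{1..T}. \<forall>j\<in>{1..K}. \<bar>l t j\<bar> \<le> \<epsilon> j) \<and>
     \<theta> * \<epsilon> k * (T - ((T / M) * E (interaction A fair_env T) (\<lambda>h. real (pulls k h))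
        + T * sqrt ((1 + \<theta>\<^sup>2) ^ M - 1)))
     \<le> bandit_exp_loss A l T - best_arm_loss K l T"
proof (rule exists_loss_in_box_ge_expectation[OF finite_indep_row[OF finite_biased_row]])
  show "\<theta> * \<epsilon> k * (T - ((T / M) * E (interaction A fair_env T) (\<lambda>h. real (pulls k h))
        + T * sqrt ((1 + \<theta>\<^sup>2) ^ M - 1)))
     \<le> E (biased_losses T) (\<lambda>l. bandit_exp_loss A l T - best_arm_loss K l T)"
    using expectation_pulls_biased_le[OF assms(1,2)] \<theta> pos
    by (intro order.trans[OF _ expectation_bandit_regret_biased] mult_left_mono) auto
next
  fix s r j assume "r \<in> set_pmf (indep_row biased_row K)" "j \<in> {1..K}"
  then have "r j \<in> set_pmf (biased_row j)" by (rule indep_row_support)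
  then show "\<bar>r j\<bar> \<le> \<epsilon> j"
    using nonneg \<open>j \<in> {1..K}\<close> sign_coin_support unfolding biased_row_def by (auto split: if_splits)
qed

end

section \<open>Many arms of comparable size\<close>

lemma power_one_plus_le_inverse:
  fixes x :: real
  assumes x: "0 \<le> x" "real M * x < 1"
  shows "(1 + x) ^ M \<le> 1 / (1 - real M * x)"
proof (cases "M = 0")
  case True
  then show ?thesis by simp
next
  case False
  then have "x < 1" using x mult_right_mono[of 1 "real M" x] by linarith
  have "(1 + x) ^ M * (1 - real M * x) \<le> (1 + x) ^ M * (1 - x) ^ M"
    using Bernoulli_inequality[of "-x" M] \<open>x < 1\<close> x by (intro mult_left_mono) auto
  also have "\<dots> = (1 - x\<^sup>2) ^ M" by (simp add: power_mult_distrib[symmetric] algebra_simps power2_eq_square)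
  also have "\<dots> \<le> 1" using x \<open>x < 1\<close> by (intro power_le_one) (auto simp: power2_eq_square mult_le_one)
  finally show ?thesis using x by (simp add: field_simps)
qed

lemma exists_ge_weighted_average:
  fixes w b :: "'k \<Rightarrow> real"
  assumes "finite J" "J \<noteq> {}" "\<And>k. k \<in> J \<Longrightarrow> w k \<ge> 0" "(\<Sum>k\<in>J. w k) = 1"
  shows "\<exists>k\<in>J. (\<Sum>j\<in>J. w j * b j) \<le> b k"
proof -
  have "Max (b ` J) \<in> b ` J" using assms(1,2) by (intro Max_in) auto
  then obtain k where k: "k \<in> J" "b k = Max (b ` J)" by auto
  have "(\<Sum>j\<in>J. w j * b j) \<le> (\<Sum>j\<in>J. w j * b k)"
    using assms(1,3) k by (intro sum_mono mult_left_mono) auto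
  also have "\<dots> = b k" using assms(4) by (simp add: sum_distrib_right[symmetric])
  finally show ?thesis using k(1) by blast
qed

lemma sum_expectation_pulls_le:
  assumes "\<And>h. finite (set_pmf (A h))" "\<And>s h i. finite (set_pmf (F s h i))" "finite J"
  shows "(\<Sum>k\<in>J. E (interaction A F T) (\<lambda>h. real (pulls k h))) \<le> T"
proof -
  have fin: "finite (set_pmf (interaction A F T))" by (rule finite_interaction[OF assms(1,2)])
  have "(\<Sum>k\<in>J. E (interaction A F T) (\<lambda>h. real (pulls k h)))
      = E (interaction A F T) (\<lambda>h. \<Sum>k\<in>J. real (pulls k h))"
    by (rule expectation_finite_sum_distrib[OF fin, symmetric])
  also have "\<dots> \<le> E (interaction A F T) (\<lambda>h. real T)"
  proof (rule expectation_finite_mono[OF fin])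
    fix h assume "h \<in> set_pmf (interaction A F T)"
    then show "(\<Sum>k\<in>J. real (pulls k h)) \<le> real T"
      using sum_pulls_le_length[OF assms(3), of h] length_interaction by (fastforce simp flip: of_nat_sum)
  qed
  finally show ?thesis by simp
qed

lemma spread_arm_parameters:
  fixes S e :: real and T :: nat
  assumes e: "0 < e" and large: "2 / T * S \<le> e\<^sup>2" and small: "8 * e\<^sup>2 < S" and T: "0 < T"
  defines "\<theta> \<equiv> sqrt (S / (128 * real T)) / e" and "M \<equiv> nat \<lfloor>8 * T * e\<^sup>2 / S\<rfloor>"
  shows "1 \<le> M" "M \<le> T" "0 \<le> \<theta>" "\<theta> \<le> 1" "sqrt ((1 + \<theta>\<^sup>2) ^ M - 1) \<le> 1/3"
    "e\<^sup>2 / S * (T / M) \<le> 1/4"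
proof -
  define x where "x = 8 * T * e\<^sup>2 / S"
  have S: "S > 0" using small zero_le_power2[of e] by linarith
  have "2 * S \<le> T * e\<^sup>2" using large T by (simp add: field_simps)
  then have x16: "16 \<le> x" unfolding x_def using S by (simp add: field_simps)
  have xT: "x < T" unfolding x_def using small S T by (simp add: field_simps)
  have "\<lfloor>x\<rfloor> \<ge> 0" using x16 by simp
  then have Mx: "real M \<le> x" "x - 1 < real M"
    unfolding M_def x_def[symmetric] using floor_correct[of x] by auto
  show "1 \<le> M" "M \<le> T" using Mx x16 xT by linarith+
  show "0 \<le> \<theta>" unfolding \<theta>_def using S T e by simp
  have \<theta>2: "\<theta>\<^sup>2 = S / (128 * T * e\<^sup>2)" unfolding \<theta>_def using S T by (simp add: power_divide)
  have "S \<le> 128 * (T * e\<^sup>2)" using \<open>2 * S \<le> T * e\<^sup>2\<close> S by linarith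
  then have "\<theta>\<^sup>2 \<le> 1" unfolding \<theta>2 using T e by (simp add: field_simps)
  then show "\<theta> \<le> 1" using power2_le_imp_le[of \<theta> 1] by simp
  have "real M * \<theta>\<^sup>2 \<le> x * \<theta>\<^sup>2" using Mx by (intro mult_right_mono) auto
  also have "x * \<theta>\<^sup>2 = 1/16" unfolding x_def \<theta>2 using S e T by (simp add: field_simps)
  finally have M\<theta>: "real M * \<theta>\<^sup>2 \<le> 1/16" .
  have "(1 + \<theta>\<^sup>2) ^ M \<le> 1 / (1 - real M * \<theta>\<^sup>2)"
    using M\<theta> by (intro power_one_plus_le_inverse) auto
  also have "\<dots> \<le> 16/15" using M\<theta> by (simp add: field_simps)
  finally have "(1 + \<theta>\<^sup>2) ^ M - 1 \<le> (1/3)\<^sup>2" by (simp add: power2_eq_square)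
  then show "sqrt ((1 + \<theta>\<^sup>2) ^ M - 1) \<le> 1/3" using real_sqrt_le_mono by fastforce
  have "real T / real M \<le> real T / (x / 2)" using Mx x16 T by (intro divide_left_mono) auto
  then have "e\<^sup>2 / S * (T / M) \<le> e\<^sup>2 / S * (T / (x / 2))" using S by (intro mult_left_mono) auto
  also have "\<dots> = 1/4" unfolding x_def using S e T by (simp add: field_simps)
  finally show "e\<^sup>2 / S * (T / M) \<le> 1/4" .
qed

lemma weighted_sum_regret_ge:
  fixes w c s :: "'k \<Rightarrow> real" and M :: "'k \<Rightarrow> nat" and T :: nat
  assumes J: "finite J" "(\<Sum>k\<in>J. w k) = 1" "(\<Sum>k\<in>J. c k) \<le> T" and D: "0 \<le> D"
    and k: "\<And>k. k \<in> J \<Longrightarrow> 0 \<le> w k \<and> 0 \<le> c k \<and> w k * (T / M k) \<le> 1/4 \<and> s k \<le> 1/3"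
  shows "5/12 * D * T \<le> (\<Sum>k\<in>J. w k * (D * (T - ((T / M k) * c k + T * s k))))"
proof -
  have "w k * (D * T) - D * (1/4) * c k - D * (w k * T * (1/3)) \<le> w k * (D * (T - ((T / M k) * c k + T * s k)))"
    if "k \<in> J" for k
  proof -
    have "D * (w k * (T / M k)) * c k \<le> D * (1/4) * c k"
      using k[OF that] D by (intro mult_right_mono mult_left_mono) auto
    moreover have "D * (w k * T * s k) \<le> D * (w k * T * (1/3))"
      using k[OF that] D by (intro mult_left_mono) auto
    ultimately show ?thesis by (simp add: algebra_simps)
  qed
  then have "(\<Sum>k\<in>J. w k * (D * T) - D * (1/4) * c k - D * (w k * T * (1/3)))
      \<le> (\<Sum>k\<in>J. w k * (D * (T - ((T / M k) * c k + T * s k))))"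
    by (rule sum_mono)
  moreover have "(\<Sum>k\<in>J. w k * (D * T) - D * (1/4) * c k - D * (w k * T * (1/3)))
      = D * T - D * (1/4) * (\<Sum>k\<in>J. c k) - D * T * (1/3)"
    unfolding sum_subtractf sum_distrib_left[symmetric] sum_distrib_right[symmetric] J(2) by simp
  moreover have "D * (1/4) * (\<Sum>k\<in>J. c k) \<le> D * (1/4) * T" using J(3) D by (intro mult_left_mono) auto
  ultimately show ?thesis by linarith
qed

text \<open>Arm \<open>k\<close> is weighted by \<open>\<epsilon>(k)\<^sup>2/S\<close>; the weighted average of the guaranteed regrets is large,
  so one of them is.\<close>

lemma bandit_regret_spread:
  assumes valid: "valid_bandit_learner K A" and K: "0 < K" and T: "0 < T"
    and nonneg: "\<forall>j\<in>{1..K}. \<epsilon> j \<ge> 0"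
    and large: "\<forall>j\<in>{1..K}. \<epsilon> j > 0 \<longrightarrow> \<epsilon> j ^ 2 \<ge> 2 / real T * (\<Sum>i=1..K. \<epsilon> i ^ 2)"
    and small: "\<forall>j\<in>{1..K}. 8 * \<epsilon> j ^ 2 < (\<Sum>i=1..K. \<epsilon> i ^ 2)"
  shows "\<exists>l. (\<forall>t\<in>{1..T}. \<forall>j\<in>{1..K}. \<bar>l t j\<bar> \<le> \<epsilon> j) \<and>
    5/12 * sqrt ((\<Sum>i=1..K. \<epsilon> i ^ 2) / (128 * real T)) * T \<le> bandit_exp_loss A l T - best_arm_loss K l T"
proof -
  define S where "S = (\<Sum>j=1..K. \<epsilon> j ^ 2)"
  define J where "J = {j\<in>{1..K}. \<epsilon> j > 0}"
  define D where "D = sqrt (S / (128 * real T))"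
  define \<theta> where "\<theta> k = D / \<epsilon> k" for k
  define M where "M k = nat \<lfloor>8 * T * \<epsilon> k ^ 2 / S\<rfloor>" for k
  define c where "c k = E (interaction A (\<lambda>s h i. sign_coin 0 (\<epsilon> i)) T) (\<lambda>h. real (pulls k h))" for k
  define w where "w k = \<epsilon> k ^ 2 / S" for k
  define b where "b k = D * (T - ((T / M k) * c k + T * sqrt ((1 + (\<theta> k)\<^sup>2) ^ M k - 1)))" for k
  have "8 * \<epsilon> 1 ^ 2 < S" using small K unfolding S_def by simp
  then have S: "S > 0" using zero_le_power2[of "\<epsilon> 1"] by linarith
  have J: "finite J" "J \<subseteq> {1..K}" unfolding J_def by auto
  have "(\<Sum>k\<in>J. \<epsilon> k ^ 2) = S"
    unfolding S_def using nonneg J by (intro sum.mono_neutral_left) (auto simp: J_def order.order_iff_strict)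
  then have wsum: "(\<Sum>k\<in>J. w k) = 1" and "J \<noteq> {}"
    using S unfolding w_def by (auto simp: sum_divide_distrib[symmetric])
  have params: "1 \<le> M k" "M k \<le> T" "0 \<le> \<theta> k" "\<theta> k \<le> 1" "\<theta> k * \<epsilon> k = D"
      "sqrt ((1 + (\<theta> k)\<^sup>2) ^ M k - 1) \<le> 1/3" "w k * (T / M k) \<le> 1/4" if "k \<in> J" for k
  proof -
    have "0 < \<epsilon> k" "2 / T * S \<le> (\<epsilon> k)\<^sup>2" "8 * (\<epsilon> k)\<^sup>2 < S"
      using that large small unfolding J_def S_def by auto
    with spread_arm_parameters[OF this T] show "1 \<le> M k" "M k \<le> T" "0 \<le> \<theta> k" "\<theta> k \<le> 1" "\<theta> k * \<epsilon> k = D"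
      "sqrt ((1 + (\<theta> k)\<^sup>2) ^ M k - 1) \<le> 1/3" "w k * (T / M k) \<le> 1/4"
      unfolding \<theta>_def D_def M_def w_def by simp_all
  qed
  have "5/12 * D * T \<le> (\<Sum>k\<in>J. w k * b k)" unfolding b_def
  proof (rule weighted_sum_regret_ge[OF J(1) wsum])
    show "(\<Sum>k\<in>J. c k) \<le> T"
      unfolding c_def by (rule sum_expectation_pulls_le[OF finite_bandit_learner[OF valid] finite_sign_coin J(1)])
    show "0 \<le> D" unfolding D_def using S by simp
  qed (use params S in \<open>auto simp: w_def c_def integral_nonneg_AE\<close>)
  moreover obtain k where k: "k \<in> J" and "(\<Sum>j\<in>J. w j * b j) \<le> b k"
    using exists_ge_weighted_average[OF J(1) \<open>J \<noteq> {}\<close> _ wsum, of b] S unfolding w_def by auto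
  ultimately have bound: "5/12 * D * T \<le> b k" by linarith
  interpret biased_arm A K \<epsilon> k "\<theta> k" "M k"
    using valid k J params[OF k] S by unfold_locales (auto simp: J_def)
  obtain l where "\<forall>t\<in>{1..T}. \<forall>j\<in>{1..K}. \<bar>l t j\<bar> \<le> \<epsilon> j" "b k \<le> bandit_exp_loss A l T - best_arm_loss K l T"
    using exists_biased_loss_regret[OF params(1,2)[OF k] nonneg] unfolding b_def c_def params(5)[OF k] by blast
  then show ?thesis using bound unfolding D_def S_def by (intro exI[of _ l]) auto
qed

lemma mult_sqrt_le_mult_sqrt:
  fixes a b x y :: real
  assumes "0 \<le> a" "0 \<le> b" "a\<^sup>2 * x \<le> b\<^sup>2 * y"
  shows "a * sqrt x \<le> b * sqrt y"
  using real_sqrt_le_mono[OF assms(3)] assms(1,2) by (simp add: real_sqrt_mult)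

lemma single_arm_bound_ge:
  fixes X e :: real and T :: nat
  assumes "0 \<le> X" "X \<le> 8 * e\<^sup>2"
  shows "1/30 * sqrt (T * X) \<le> sqrt (T * e\<^sup>2 / 3) / 2"
proof -
  have "T * X \<le> T * (75 * e\<^sup>2)" using assms by (intro mult_left_mono) auto
  then have "1/30 * sqrt (T * X) \<le> 1/2 * sqrt (T * e\<^sup>2 / 3)"
    by (intro mult_sqrt_le_mult_sqrt) (simp_all add: power2_eq_square mult_ac)
  then show ?thesis by simp
qed

lemma spread_bound_ge:
  fixes S :: real and T :: nat
  assumes "0 \<le> S" "0 < T"
  shows "1/30 * sqrt (T * S) \<le> 5/12 * sqrt (S / (128 * real T)) * T"
proof -
  have "1/30 * sqrt (T * S) \<le> (5/12 * T) * sqrt (S / (128 * real T))"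
    using assms by (intro mult_sqrt_le_mult_sqrt) (simp_all add: power2_eq_square field_simps)
  then show ?thesis by (simp add: mult_ac)
qed

lemma bandit_regret_single_arm:
  assumes valid: "valid_bandit_learner K A" and K: "1 < K" and T: "0 < T"
    and nonneg: "\<forall>j\<in>{1..K}. \<epsilon> j \<ge> 0" and k: "k \<in> {1..K}"
  shows "\<exists>l. (\<forall>t\<in>{1..T}. \<forall>j\<in>{1..K}. \<bar>l t j\<bar> \<le> \<epsilon> j) \<and>
    sqrt (T * (\<epsilon> k)\<^sup>2 / 3) / 2 \<le> bandit_exp_loss A l T - best_arm_loss K l T"
proof -
  obtain k' where "k' \<in> {1..K}" "k \<noteq> k'" using exists_other_arm[OF K] .
  then show ?thesis
    by (rule single_arm_walk_witness[OF nonneg k single_arm_walk_bandit_regret[OF valid k _ _ T]])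
qed

lemma full_regret_single_arm:
  assumes valid: "valid_full_learner K A" and K: "1 < K" and T: "0 < T"
    and nonneg: "\<forall>j\<in>{1..K}. \<epsilon> j \<ge> 0" and k: "k \<in> {1..K}"
  shows "\<exists>l. (\<forall>t\<in>{1..T}. \<forall>j\<in>{1..K}. \<bar>l t j\<bar> \<le> \<epsilon> j) \<and>
    sqrt (T * (\<epsilon> k)\<^sup>2 / 3) / 2 \<le> full_exp_loss A l T - best_arm_loss K l T"
proof -
  obtain k' where "k' \<in> {1..K}" "k \<noteq> k'" using exists_other_arm[OF K] .
  then show ?thesis
    by (rule single_arm_walk_witness[OF nonneg k single_arm_walk_full_regret[OF valid k _ _ T]])
qed

lemma bandit_regret_lower_bound:
  assumes valid: "valid_bandit_learner K A" and K: "1 < K" and T: "0 < T"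
    and nonneg: "\<forall>j\<in>{1..K}. \<epsilon> j \<ge> 0"
    and large: "\<forall>j\<in>{1..K}. \<epsilon> j > 0 \<longrightarrow> \<epsilon> j ^ 2 \<ge> 2 / real T * (\<Sum>i=1..K. \<epsilon> i ^ 2)"
  shows "\<exists>l. (\<forall>t\<in>{1..T}. \<forall>j\<in>{1..K}. \<bar>l t j\<bar> \<le> \<epsilon> j) \<and>
    1/30 * sqrt (T * (\<Sum>j=1..K. \<epsilon> j ^ 2)) \<le> bandit_exp_loss A l T - best_arm_loss K l T"
proof (cases "\<exists>k\<in>{1..K}. (\<Sum>j=1..K. \<epsilon> j ^ 2) \<le> 8 * \<epsilon> k ^ 2")
  case True
  then obtain k where k: "k \<in> {1..K}" "(\<Sum>j=1..K. \<epsilon> j ^ 2) \<le> 8 * \<epsilon> k ^ 2" by blast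
  have "1/30 * sqrt (T * (\<Sum>j=1..K. \<epsilon> j ^ 2)) \<le> sqrt (T * (\<epsilon> k)\<^sup>2 / 3) / 2"
    using k(2) by (intro single_arm_bound_ge sum_nonneg) auto
  with bandit_regret_single_arm[OF valid K T nonneg k(1)] show ?thesis by (meson order.trans)
next
  case False
  then have "\<forall>j\<in>{1..K}. 8 * \<epsilon> j ^ 2 < (\<Sum>i=1..K. \<epsilon> i ^ 2)" by auto
  then obtain l where "\<forall>t\<in>{1..T}. \<forall>j\<in>{1..K}. \<bar>l t j\<bar> \<le> \<epsilon> j"
    "5/12 * sqrt ((\<Sum>i=1..K. \<epsilon> i ^ 2) / (128 * real T)) * T \<le> bandit_exp_loss A l T - best_arm_loss K l T"
    using bandit_regret_spread[OF valid _ T nonneg large] K by auto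
  moreover have "0 \<le> (\<Sum>i=1..K. \<epsilon> i ^ 2)" by (simp add: sum_nonneg)
  ultimately show ?thesis using spread_bound_ge[OF _ T] by (meson order.trans)
qed

lemma full_regret_lower_bound:
  assumes valid: "valid_full_learner K A" and K: "1 < K" and T: "0 < T"
    and nonneg: "\<forall>j\<in>{1..K}. \<epsilon> j \<ge> 0"
  shows "\<exists>l. (\<forall>t\<in>{1..T}. \<forall>j\<in>{1..K}. \<bar>l t j\<bar> \<le> \<epsilon> j) \<and>
    1/30 * sqrt (T * (MAX j\<in>{1..K}. \<epsilon> j ^ 2)) \<le> full_exp_loss A l T - best_arm_loss K l T"
proof -
  have "(MAX j\<in>{1..K}. \<epsilon> j ^ 2) \<in> (\<lambda>j. \<epsilon> j ^ 2) ` {1..K}" using K by (intro Max_in) auto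
  then obtain k where k: "k \<in> {1..K}" "\<epsilon> k ^ 2 = (MAX j\<in>{1..K}. \<epsilon> j ^ 2)" by auto
  have "1/30 * sqrt (T * (MAX j\<in>{1..K}. \<epsilon> j ^ 2)) \<le> sqrt (T * (\<epsilon> k)\<^sup>2 / 3) / 2"
    unfolding k(2)[symmetric] by (rule single_arm_bound_ge) auto
  with full_regret_single_arm[OF valid K T nonneg k(1)] show ?thesis by (meson order.trans)
qed

theorem theorem2:
  shows "\<exists>c::real. c > 0 \<and>
    (\<forall>(T::nat) (K::nat) (\<epsilon>::nat \<Rightarrow> real).
      T > 1 \<longrightarrow> K > 1 \<longrightarrow> (\<forall>j\<in>{1..K}. \<epsilon> j \<ge> 0) \<longrightarrow>
      (\<forall>j\<in>{1..K}. \<epsilon> j > 0 \<longrightarrow> \<epsilon> j ^ 2 \<ge> 2 / real T * (\<Sum>i=1..K. \<epsilon> i ^ 2)) \<longrightarrow>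
      (\<exists>m::nat \<Rightarrow> real.
        (\<forall>A. valid_bandit_learner K A \<longrightarrow>
           (\<exists>l::nat \<Rightarrow> nat \<Rightarrow> real.
              (\<forall>t\<in>{1..T}. \<forall>j\<in>{1..K}. \<bar>l t j - m j\<bar> \<le> \<epsilon> j) \<and>
              bandit_exp_loss A l T - best_arm_loss K l T
                \<ge> c * sqrt (real T * (\<Sum>j=1..K. \<epsilon> j ^ 2)))) \<and>
        (\<forall>A. valid_full_learner K A \<longrightarrow>
           (\<exists>l::nat \<Rightarrow> nat \<Rightarrow> real.
              (\<forall>t\<in>{1..T}. \<forall>j\<in>{1..K}. \<bar>l t j - m j\<bar> \<le> \<epsilon> j) \<and>
              full_exp_loss A l T - best_arm_loss K l T
                \<ge> c * sqrt (real T * (MAX j\<in>{1..K}. \<epsilon> j ^ 2))))))"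
proof (intro exI[of _ "1/30"] conjI allI impI)
  fix T K :: nat and \<epsilon> :: "nat \<Rightarrow> real"
  assume "T > 1" "K > 1" "\<forall>j\<in>{1..K}. \<epsilon> j \<ge> 0"
    "\<forall>j\<in>{1..K}. \<epsilon> j > 0 \<longrightarrow> \<epsilon> j ^ 2 \<ge> 2 / real T * (\<Sum>i=1..K. \<epsilon> i ^ 2)"
  then show "\<exists>m. (\<forall>A. valid_bandit_learner K A \<longrightarrow> (\<exists>l. (\<forall>t\<in>{1..T}. \<forall>j\<in>{1..K}. \<bar>l t j - m j\<bar> \<le> \<epsilon> j) \<and>
        1/30 * sqrt (real T * (\<Sum>j=1..K. \<epsilon> j ^ 2)) \<le> bandit_exp_loss A l T - best_arm_loss K l T)) \<and>
      (\<forall>A. valid_full_learner K A \<longrightarrow> (\<exists>l. (\<forall>t\<in>{1..T}. \<forall>j\<in>{1..K}. \<bar>l t j - m j\<bar> \<le> \<epsilon> j) \<and>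
        1/30 * sqrt (real T * (MAX j\<in>{1..K}. \<epsilon> j ^ 2)) \<le> full_exp_loss A l T - best_arm_loss K l T))"
    using bandit_regret_lower_bound full_regret_lower_bound by (intro exI[of _ "\<lambda>_. 0"]) simp
qed simp

end
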